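(* Let $\varepsilon>0$, $u_0\in\mathcal V_{[0,1]}\setminus\{\mathbf 0,\mathbf 1\}$, and let $\tau_n\downarrow0$ with $\tau_n<\varepsilon$ be such that for every $t\ge0$ the limit $\hat u(t):=\lim_{n\to\infty}u^{[\tau_n]}_{\lceil t/\tau_n\rceil}$ exists and $\hat u$ is (together with some $\gamma$) a solution of mass-conserving double-obstacle AC flow on $[0,\infty)$ with $\hat u(0)=u_0$. Then for all $t>s\ge0$, \[ \mathrm{GL}_\varepsilon(\hat u(s)) - \mathrm{GL}_\varepsilon(\hat u(t)) \geq \frac{1}{2(t-s)} \|\hat u(s) -\hat u(t) \|_{\mathcal V}^2; \] in particular $t\mapsto\mathrm{GL}_\varepsilon(\hat u(t))$ is monotonically non-increasing.
   Context: $G=(V,E)$ is a finite, simple, connected, undirected graph with weights $\omega_{ij}=\omega_{ji}>0$ for $ij\in E$, $\omega_{ij}=0$ otherwise; $d_i=\sum_j\omega_{ij}$, $r\in[0,1]$ fixed. $\mathcal V$ = functions $V\to\mathbb R$ with $\langle u,v\rangle_{\mathcal V}=\sum_i u_iv_id_i^r$ and norm $\|\cdot\|_{\mathcal V}$; $\mathcal V_{[0,1]}$ = functions $V\to[0,1]$. $\mathcal E$ = functions on $E$ with $\langle\varphi,\phi\rangle_{\mathcal E}=\frac12\sum_{i,j}\varphi_{ij}\phi_{ij}\omega_{ij}$, $(\nabla u)_{ij}=u_j-u_i$ if $ij\in E$, else $0$. $(\Delta u)_i=d_i^{-r}\sum_j\omega_{ij}(u_i-u_j)$, $e^{-\tau\Delta}$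 its matrix exponential. $\mathbf 1$ all-ones, $\mathbf 0$ zero function; $\mathcal M(u)=\langle u,\mathbf 1\rangle_{\mathcal V}$; $\bar v=\mathcal M(v)/\mathcal M(\mathbf 1)$. Ginzburg–Landau functional: $\mathrm{GL}_\varepsilon(u)=\frac12\|\nabla u\|_{\mathcal E}^2+\frac1\varepsilon\sum_i d_i^rW(u_i)$ with $W(x)=\frac12x(1-x)$ for $x\in[0,1]$ and $W(x)=\infty$ otherwise. For $u\in\mathcal V_{[0,1]}$, $\mathcal B(u)$ = set of $\beta\in\mathcal V$ with $\beta_i\ge0$ if $u_i=0$, $\beta_i=0$ if $0<u_i<1$, $\beta_i\le0$ if $u_i=1$. Semi-discrete iterates with time step $\tau$, $\lambda=\tau/\varepsilon$ and initial state $u_0$: $u^{[\tau]}_0=u_0$ and for $m\ge0$, some $\beta^{[\tau]}_{m+1}\in\mathcal B(u^{[\tau]}_{m+1})$ with $u^{[\tau]}_{m+1} -e^{-\tau\Delta}u^{[\tau]}_m-\lambda u^{[\tau]}_{m+1}+\lambda\overline{u^{[\tau]}_{m+1}}\mathbf{1} =\lambda\beta^{[\tau]}_{m+1} -\lambda\overline{\beta^{[\tau]}_{m+1}}\mathbf{1}$ (for $\tau<\varepsilon$ the $u^{[\tau]}_m$ are uniquely determined). A pair $(u,\beta)$ is a solution to mass-conserving double-obstacle AC flow on $[0,\infty)$ if $u\in H^1_{loc}\cap C^0$, $u(t)\in\mathcal V_{[0,1]}$, and for a.e. $t$: $\varepsilon \frac{du}{dt} + \varepsilon\Delta u-u+\bar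 u\mathbf{1} = \beta - \bar\beta\mathbf{1}$, $\beta(t)\in\mathcal B(u(t))$. *)

theory Defs
  imports "HOL-Analysis.Analysis"
begin

definition wgraph :: "('v::finite \<Rightarrow> 'v \<Rightarrow> real) \<Rightarrow> bool" where
  "wgraph \<omega> \<longleftrightarrow> (\<forall>i j. \<omega> i j = \<omega> j i) \<and> (\<forall>i j. 0 \<le> \<omega> i j) \<and> (\<forall>i. \<omega> i i = 0)
     \<and> (\<forall>i j. (i, j) \<in> {(a, b). 0 < \<omega> a b}\<^sup>*)"

definition deg :: "('v::finite \<Rightarrow> 'v \<Rightarrow> real) \<Rightarrow> 'v \<Rightarrow> real" where
  "deg \<omega> i = (\<Sum>j\<in>UNIV. \<omega> i j)"

text \<open>\<open>d_i^r\<close>, with the convention \<open>x^0 = 1\<close>.\<close>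
definition degr :: "('v::finite \<Rightarrow> 'v \<Rightarrow> real) \<Rightarrow> real \<Rightarrow> 'v \<Rightarrow> real" where
  "degr \<omega> r i = (if r = 0 then 1 else deg \<omega> i powr r)"

definition innerV :: "('v::finite \<Rightarrow> 'v \<Rightarrow> real) \<Rightarrow> real \<Rightarrow> ('v \<Rightarrow> real) \<Rightarrow> ('v \<Rightarrow> real) \<Rightarrow> real" where
  "innerV \<omega> r u v = (\<Sum>i\<in>UNIV. u i * v i * degr \<omega> r i)"

definition normV :: "('v::finite \<Rightarrow> 'v \<Rightarrow> real) \<Rightarrow> real \<Rightarrow> ('v \<Rightarrow> real) \<Rightarrow> real" where
  "normV \<omega> r u = sqrt (innerV \<omega> r u u)"

definition innerE :: "('v::finite \<Rightarrow> 'v \<Rightarrow> real) \<Rightarrow> ('v \<Rightarrow> 'v \<Rightarrow> real) \<Rightarrow> ('v \<Rightarrow> 'v \<Rightarrow> real) \<Rightarrow> real" where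
  "innerE \<omega> \<phi> \<psi> = 1/2 * (\<Sum>i\<in>UNIV. \<Sum>j\<in>UNIV. \<phi> i j * \<psi> i j * \<omega> i j)"

definition normE :: "('v::finite \<Rightarrow> 'v \<Rightarrow> real) \<Rightarrow> ('v \<Rightarrow> 'v \<Rightarrow> real) \<Rightarrow> real" where
  "normE \<omega> \<phi> = sqrt (innerE \<omega> \<phi> \<phi>)"

definition grad :: "('v::finite \<Rightarrow> 'v \<Rightarrow> real) \<Rightarrow> ('v \<Rightarrow> real) \<Rightarrow> 'v \<Rightarrow> 'v \<Rightarrow> real" where
  "grad \<omega> u i j = (if 0 < \<omega> i j then u j - u i else 0)"

definition lap :: "('v::finite \<Rightarrow> 'v \<Rightarrow> real) \<Rightarrow> real \<Rightarrow> ('v \<Rightarrow> real) \<Rightarrow> 'v \<Rightarrow> real" where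
  "lap \<omega> r u i = (1 / degr \<omega> r i) * (\<Sum>j\<in>UNIV. \<omega> i j * (u i - u j))"

text \<open>Matrix exponential \<open>e^{-\<tau>\<Delta>}\<close> applied to a function, via its power series.\<close>
definition heat :: "('v::finite \<Rightarrow> 'v \<Rightarrow> real) \<Rightarrow> real \<Rightarrow> real \<Rightarrow> ('v \<Rightarrow> real) \<Rightarrow> 'v \<Rightarrow> real" where
  "heat \<omega> r \<tau> u i = (\<Sum>k. (- \<tau>) ^ k / fact k * ((lap \<omega> r ^^ k) u) i)"

definition mass :: "('v::finite \<Rightarrow> 'v \<Rightarrow> real) \<Rightarrow> real \<Rightarrow> ('v \<Rightarrow> real) \<Rightarrow> real" where
  "mass \<omega> r u = innerV \<omega> r u (\<lambda>_. 1)"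

definition avg :: "('v::finite \<Rightarrow> 'v \<Rightarrow> real) \<Rightarrow> real \<Rightarrow> ('v \<Rightarrow> real) \<Rightarrow> real" where
  "avg \<omega> r u = mass \<omega> r u / mass \<omega> r (\<lambda>_. 1)"

definition V01 :: "('v \<Rightarrow> real) set" where
  "V01 = {u. \<forall>i. 0 \<le> u i \<and> u i \<le> 1}"

definition Wdo :: "real \<Rightarrow> ereal" where
  "Wdo x = (if 0 \<le> x \<and> x \<le> 1 then ereal (x * (1 - x) / 2) else \<infinity>)"

definition GL :: "('v::finite \<Rightarrow> 'v \<Rightarrow> real) \<Rightarrow> real \<Rightarrow> real \<Rightarrow> ('v \<Rightarrow> real) \<Rightarrow> ereal" where
  "GL \<omega> r \<epsilon> u = ereal (1/2 * (normE \<omega> (grad \<omega> u))\<^sup>2)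
      + ereal (1/\<epsilon>) * (\<Sum>i\<in>UNIV. ereal (degr \<omega> r i) * Wdo (u i))"

definition Bset :: "('v \<Rightarrow> real) \<Rightarrow> ('v \<Rightarrow> real) set" where
  "Bset u = {\<beta>. \<forall>i. (u i = 0 \<longrightarrow> \<beta> i \<ge> 0) \<and> (0 < u i \<and> u i < 1 \<longrightarrow> \<beta> i = 0)
                   \<and> (u i = 1 \<longrightarrow> \<beta> i \<le> 0)}"

definition semidiscrete :: "('v::finite \<Rightarrow> 'v \<Rightarrow> real) \<Rightarrow> real \<Rightarrow> real \<Rightarrow> real \<Rightarrow> ('v \<Rightarrow> real)
    \<Rightarrow> (nat \<Rightarrow> 'v \<Rightarrow> real) \<Rightarrow> bool" where
  "semidiscrete \<omega> r \<epsilon> \<tau> u0 U \<longleftrightarrow> U 0 = u0 \<and>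
     (\<forall>m. U (Suc m) \<in> V01 \<and> (\<exists>\<beta>\<in>Bset (U (Suc m)). \<forall>i.
        U (Suc m) i - heat \<omega> r \<tau> (U m) i - (\<tau>/\<epsilon>) * U (Suc m) i + (\<tau>/\<epsilon>) * avg \<omega> r (U (Suc m))
        = (\<tau>/\<epsilon>) * \<beta> i - (\<tau>/\<epsilon>) * avg \<omega> r \<beta>))"

text \<open>\<open>H^1_loc([0,\<infinity>); \<V>)\<close>: each component is an indefinite integral of a locally
  square-integrable function on [0,\<infinity>).\<close>
definition H1loc :: "(real \<Rightarrow> 'v \<Rightarrow> real) \<Rightarrow> bool" where
  "H1loc u \<longleftrightarrow> (\<forall>i. \<exists>g. (\<forall>T\<ge>0. set_integrable lborel {0..T} g
        \<and> set_integrable lborel {0..T} (\<lambda>t. (g t)\<^sup>2))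
      \<and> (\<forall>t\<ge>0. u t i = u 0 i + (LINT s:{0..t}|lborel. g s)))"

definition ACsol :: "('v::finite \<Rightarrow> 'v \<Rightarrow> real) \<Rightarrow> real \<Rightarrow> real \<Rightarrow> (real \<Rightarrow> 'v \<Rightarrow> real)
    \<Rightarrow> (real \<Rightarrow> 'v \<Rightarrow> real) \<Rightarrow> bool" where
  "ACsol \<omega> r \<epsilon> u \<beta> \<longleftrightarrow> H1loc u \<and> (\<forall>i. continuous_on {0..} (\<lambda>t. u t i))
     \<and> (\<forall>t\<ge>0. u t \<in> V01)
     \<and> (AE t in lborel. 0 < t \<longrightarrow> (\<exists>u'. (\<forall>i. ((\<lambda>s. u s i) has_real_derivative u' i) (at t))
          \<and> \<beta> t \<in> Bset (u t)
          \<and> (\<forall>i. \<epsilon> * u' i + \<epsilon> * lap \<omega> r (u t) i - u t i + avg \<omega> r (u t)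
                 = \<beta> t i - avg \<omega> r (\<beta> t))))"

end

theory Submission
  imports Defs
begin

text \<open>
  For a solution \<open>u\<close> of the flow and a fixed \<open>v\<close>, the tilted energy
  \<open>\<psi>(y) = GL(u(y)) + 2<u(y), v> - y |v|\<^sup>2\<close> has derivative \<open>-|u' - v|\<^sup>2 \<le> 0\<close> almost
  everywhere: testing the equation with \<open>u'\<close>, the obstacle term vanishes because \<open>u'\<^sub>i \<beta>\<^sub>i = 0\<close>
  (where \<open>\<beta>\<^sub>i \<noteq> 0\<close>, \<open>u\<^sub>i\<close> is at its extremum 0 or 1) and the averages vanish because
  \<open>u'\<close> has zero mass. As \<open>u \<in> H\<^sup>1\<^sub>l\<^sub>o\<^sub>c\<close>, the increments of \<open>\<psi>\<close> are dominated by the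
  integral of a nonnegative integrable function, and such a function with almost everywhere
  nonpositive derivative is nonincreasing (it maps null sets to null sets).
  For \<open>v = (u(t) - u(s)) / (t - s)\<close> the inequality \<open>\<psi>(t) \<le> \<psi>(s)\<close> reads
  \<open>GL(u(s)) - GL(u(t)) \<ge> |u(s) - u(t)|\<^sup>2 / (t - s)\<close>, twice the claimed bound.
\<close>

section \<open>Luzin's N property and monotonicity\<close>

lemma abs_diff_le_measure_of_interval:
  fixes f :: "real \<Rightarrow> real" and \<nu> :: "real measure"
  assumes fin: "finite_measure \<nu>"
    and bnd: "\<And>x y. a < x \<Longrightarrow> x \<le> y \<Longrightarrow> y < b \<Longrightarrow> \<bar>f y - f x\<bar> \<le> measure \<nu> {x..y}"
    and C: "is_interval C" "C \<subseteq> {a<..<b}" "C \<in> sets \<nu>" and x: "x \<in> C" "x' \<in> C"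
  shows "\<bar>f x - f x'\<bar> \<le> measure \<nu> C"
proof -
  define l h where "l = min x x'" and "h = max x x'"
  have lh: "l \<in> C" "h \<in> C" "l \<le> h"
    using x unfolding l_def h_def by (auto simp: min_def max_def)
  then have "{l..h} \<subseteq> C"
    using C(1) unfolding is_interval_1 by (meson atLeastAtMost_iff subsetI)
  then have "measure \<nu> {l..h} \<le> measure \<nu> C"
    using C(3) by (rule finite_measure.finite_measure_mono[OF fin])
  moreover have "\<bar>f h - f l\<bar> \<le> measure \<nu> {l..h}"
    using C(2) lh by (intro bnd) auto
  moreover have "\<bar>f x - f x'\<bar> = \<bar>f h - f l\<bar>"
    unfolding l_def h_def by (cases "x \<le> x'") (simp_all add: abs_minus_commute)
  ultimately show ?thesis by simp
qed

lemma image_open_subset_small_lmeasurable: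
  fixes f :: "real \<Rightarrow> real" and \<nu> :: "real measure"
  assumes sets: "sets \<nu> = sets borel" and fin: "finite_measure \<nu>"
    and bnd: "\<And>x y. a < x \<Longrightarrow> x \<le> y \<Longrightarrow> y < b \<Longrightarrow> \<bar>f y - f x\<bar> \<le> measure \<nu> {x..y}"
    and S: "open S" "S \<subseteq> {a<..<b}"
  obtains T where "f ` S \<subseteq> T" "T \<in> lmeasurable" "measure lebesgue T \<le> 2 * measure \<nu> S"
proof -
  \<comment> \<open>The image of a component \<open>C\<close> of \<open>S\<close> lies in an interval of length \<open>2 \<nu>(C)\<close>;
    the components are enumerated by the rationals they contain.\<close>
  define cc where "cc q = connected_component_set S q" for q
  define B where "B C = {f (SOME x. x \<in> C) - measure \<nu> C .. f (SOME x. x \<in> C) + measure \<nu> C}" for C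
  define Q where "Q = \<rat> \<inter> S"
  have cc_sets: "cc q \<in> sets \<nu>" for q
    using open_connected_component[OF S(1)] unfolding sets cc_def by auto
  have in_B: "f x \<in> B (cc q)" if x: "x \<in> cc q" for x q
  proof -
    have "(SOME x. x \<in> cc q) \<in> cc q"
      using x by (rule someI)
    moreover have "is_interval (cc q)" "cc q \<subseteq> {a<..<b}"
      using connected_component_subset[of S q] S(2) unfolding cc_def
      by (auto simp: is_interval_connected_1)
    ultimately show ?thesis
      using abs_diff_le_measure_of_interval[where a=a and b=b, OF fin bnd _ _ cc_sets x] unfolding B_def
      by (force simp: abs_le_iff)
  qed
  have cover: "f ` S \<subseteq> (\<Union>q\<in>Q. B (cc q))"
  proof
    fix y assume "y \<in> f ` S"
    then obtain x where x: "x \<in> S" "y = f x" by auto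
    then have "open (cc x)" "x \<in> cc x"
      using open_connected_component[OF S(1)] unfolding cc_def by auto
    then obtain d where "d > 0" "ball x d \<subseteq> cc x"
      using open_contains_ball by blast
    moreover obtain q where "q \<in> \<rat>" "x < q" "q < x + d"
      using Rats_dense_in_real[of x "x + d"] \<open>d > 0\<close> by auto
    ultimately have "q \<in> cc x" "q \<in> \<rat>" by (auto simp: dist_real_def)
    then have "cc q = cc x" "q \<in> Q"
      using connected_component_eq connected_component_subset unfolding Q_def cc_def by blast+
    then show "y \<in> (\<Union>q\<in>Q. B (cc q))"
      using in_B[of x x] \<open>x \<in> cc x\<close> x(2) by (metis UN_iff)
  qed
  have B_meas: "B C \<in> lmeasurable" for C
    unfolding B_def by (rule lmeasurable_interval)
  have bound: "measure lebesgue (\<Union>q\<in>I. B (cc q)) \<le> 2 * measure \<nu> S" if I: "finite I" for I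
  proof -
    have disj: "disjoint_family_on (\<lambda>C. C) (cc ` I)"
      unfolding disjoint_family_on_def cc_def using connected_component_nonoverlap by blast
    have "measure lebesgue (\<Union>q\<in>I. B (cc q)) \<le> (\<Sum>C\<in>cc ` I. measure lebesgue (B C))"
      unfolding image_image[of B cc, symmetric] using B_meas I by (intro measure_UNION_le) auto
    also have "\<dots> \<le> (\<Sum>C\<in>cc ` I. 2 * measure \<nu> C)"
      by (intro sum_mono) (simp add: B_def)
    also have "\<dots> = 2 * measure \<nu> (\<Union>C\<in>cc ` I. C)"
      using finite_measure.finite_measure_finite_Union[OF fin _ _ disj] I cc_sets
      by (simp add: sum_distrib_left image_subset_iff)
    also have "\<dots> \<le> 2 * measure \<nu> S"
      using connected_component_subset[of S] cc_sets S sets unfolding cc_def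
      by (intro mult_left_mono finite_measure.finite_measure_mono[OF fin]) auto
    finally show ?thesis .
  qed
  have "countable Q"
    unfolding Q_def by (simp add: countable_rat)
  then show thesis
    using that[OF cover] fmeasurable_UN_bound[OF _ B_meas bound] measure_UN_bound[OF _ B_meas bound]
    by auto
qed

lemma emeasure_density_set_integrable:
  fixes k :: "real \<Rightarrow> real"
  assumes k: "set_integrable lborel A k" and k0: "\<And>x. x \<in> A \<Longrightarrow> 0 \<le> k x"
    and A: "A \<in> sets borel" and B: "B \<in> sets borel"
  shows "emeasure (density lborel (\<lambda>t. ennreal (indicator A t * k t))) B
    = ennreal (LINT t:A \<inter> B|lborel. k t)"
proof -
  have AB: "set_integrable lborel (A \<inter> B) k"
    using A B by (intro set_integrable_subset[OF k]) auto
  have "emeasure (density lborel (\<lambda>t. ennreal (indicator A t * k t))) B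
      = (\<integral>\<^sup>+ t. ennreal (indicator A t * k t) * indicator B t \<partial>lborel)"
    using k B unfolding set_integrable_def by (intro emeasure_density) auto
  also have "\<dots> = (\<integral>\<^sup>+ t. ennreal (indicator (A \<inter> B) t * k t) \<partial>lborel)"
    by (intro nn_integral_cong) (simp add: indicator_def)
  also have "\<dots> = ennreal (LINT t:A \<inter> B|lborel. k t)"
    using AB k0 unfolding set_integrable_def set_lebesgue_integral_def
    by (subst nn_integral_eq_integral) (auto simp: indicator_def)
  finally show ?thesis .
qed

lemma negligible_image_if_increments_dominated_by_measure:
  fixes f :: "real \<Rightarrow> real" and \<nu> :: "real measure"
  assumes sets: "sets \<nu> = sets borel" and fin: "finite_measure \<nu>"
    and null: "\<And>A. A \<in> null_sets lborel \<Longrightarrow> emeasure \<nu> A = 0"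
    and bnd: "\<And>x y. a < x \<Longrightarrow> x \<le> y \<Longrightarrow> y < b \<Longrightarrow> \<bar>f y - f x\<bar> \<le> measure \<nu> {x..y}"
    and N: "negligible N" "N \<subseteq> {a<..<b}"
  shows "negligible (f ` N)"
proof -
  obtain N' where N': "N' \<in> null_sets lborel" "N \<subseteq> N'"
    using N(1) null_sets_completion_iff2[of N lborel] by (auto simp: negligible_iff_null_sets)
  have "emeasure \<nu> (space \<nu>) \<noteq> \<infinity>"
    using finite_measure.emeasure_finite[OF fin] by simp
  then have outer: "(INF U\<in>{U. N' \<subseteq> U \<and> open U}. emeasure \<nu> U) = 0"
    using outer_regular[OF sets, of N'] N'(1) null[OF N'(1)] by (simp add: null_sets_def)
  show ?thesis
    unfolding negligible_outer_le
  proof (intro allI impI)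
    fix e :: real assume "e > 0"
    then have "(INF U\<in>{U. N' \<subseteq> U \<and> open U}. emeasure \<nu> U) < ennreal (e / 2)"
      unfolding outer by simp
    then obtain U where U: "N' \<subseteq> U" "open U" "emeasure \<nu> U < ennreal (e / 2)"
      by (auto simp: INF_less_iff)
    obtain T where T: "f ` (U \<inter> {a<..<b}) \<subseteq> T" "T \<in> lmeasurable"
      "measure lebesgue T \<le> 2 * measure \<nu> (U \<inter> {a<..<b})"
      by (rule image_open_subset_small_lmeasurable[where a=a and b=b and S="U \<inter> {a<..<b}",
          OF sets fin bnd])
        (use U(2) in auto)
    have "measure \<nu> (U \<inter> {a<..<b}) \<le> measure \<nu> U"
      using U(2) sets by (intro finite_measure.finite_measure_mono[OF fin]) auto
    also have "measure \<nu> U < e / 2"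
      using U(3) \<open>e > 0\<close> unfolding finite_measure.emeasure_eq_measure[OF fin]
      by (simp add: ennreal_less_iff)
    finally have "measure lebesgue T \<le> e"
      using T(3) by simp
    moreover have "f ` N \<subseteq> T"
      using T(1) N(2) N'(2) U(1) by fast
    ultimately show "\<exists>T. f ` N \<subseteq> T \<and> T \<in> lmeasurable \<and> measure lebesgue T \<le> e"
      using T(2) by blast
  qed
qed

lemma negligible_image_if_increments_dominated:
  fixes f k :: "real \<Rightarrow> real"
  assumes k: "set_integrable lborel {a..b} k" and k0: "\<And>x. x \<in> {a..b} \<Longrightarrow> 0 \<le> k x"
    and bnd: "\<And>x y. a \<le> x \<Longrightarrow> x \<le> y \<Longrightarrow> y \<le> b \<Longrightarrow> \<bar>f y - f x\<bar> \<le> (LINT t:{x..y}|lborel. k t)"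
    and N: "negligible N" "N \<subseteq> {a<..<b}"
  shows "negligible (f ` N)"
proof -
  define \<nu> where "\<nu> = density lborel (\<lambda>t. ennreal (indicator {a..b} t * k t))"
  have \<nu>: "emeasure \<nu> B = ennreal (LINT t:{a..b} \<inter> B|lborel. k t)" if "B \<in> sets borel" for B
    unfolding \<nu>_def using emeasure_density_set_integrable[OF k k0 _ that] by simp
  have sets: "sets \<nu> = sets borel"
    unfolding \<nu>_def by simp
  have "(\<lambda>t. ennreal (indicator {a..b} t * k t)) \<in> borel_measurable lborel"
    using borel_measurable_integrable[OF k[unfolded set_integrable_def]] by simp
  then have null: "emeasure \<nu> A = 0" if "A \<in> null_sets lborel" for A
    using absolutely_continuousD[OF absolutely_continuousI_density] that unfolding \<nu>_def
    by blast
  have bnd\<nu>: "\<bar>f y - f x\<bar> \<le> measure \<nu> {x..y}" if "a < x" "x \<le> y" "y < b" for x y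
  proof -
    have "0 \<le> (LINT t:{x..y}|lborel. k t)"
      unfolding set_lebesgue_integral_def using k0 that
      by (intro integral_nonneg_AE) (auto simp: indicator_def)
    moreover have "{a..b} \<inter> {x..y} = {x..y}"
      using that by auto
    ultimately show ?thesis
      using bnd[of x y] \<nu>[of "{x..y}"] that by (simp add: measure_def)
  qed
  show ?thesis
  proof (rule negligible_image_if_increments_dominated_by_measure[OF sets _ null bnd\<nu> N])
    show "finite_measure \<nu>"
      by (rule finite_measureI) (simp add: sets \<nu> sets_eq_imp_space_eq[OF sets])
  qed
qed

lemma DERIV_neg_off_null_image_imp_nonincreasing:
  fixes f :: "real \<Rightarrow> real"
  assumes "a \<le> b" and cont: "continuous_on {a..b} f" and Z: "negligible (f ` Z)"
    and der: "\<And>x. a < x \<Longrightarrow> x < b \<Longrightarrow> x \<notin> Z \<Longrightarrow> \<exists>D. DERIV f x :> D \<and> D < 0"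
  shows "f b \<le> f a"
proof (rule ccontr)
  assume "\<not> f b \<le> f a"
  have "{f a<..<f b} \<subseteq> f ` Z"
  proof
    \<comment> \<open>The last point where \<open>f\<close> takes the value \<open>y\<close> cannot be a point of strict decrease.\<close>
    fix y assume y: "y \<in> {f a<..<f b}"
    define S where "S = {x\<in>{a..b}. f x = y}"
    have "S \<noteq> {}"
      using IVT'[of f a y b] y \<open>a \<le> b\<close> cont unfolding S_def by auto
    moreover have bdd: "bdd_above S"
      unfolding S_def by (rule bdd_aboveI[of _ b]) auto
    moreover have "closed S"
      unfolding S_def by (rule continuous_closed_preimage_constant[OF cont]) simp
    ultimately have x: "Sup S \<in> S"
      by (rule closed_contains_Sup)
    have "Sup S \<in> Z"
    proof (rule ccontr)
      assume "Sup S \<notin> Z"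
      moreover have "a < Sup S" "Sup S < b"
        using x y unfolding S_def by (auto simp: order.order_iff_strict)
      ultimately obtain D where "DERIV f (Sup S) :> D" "D < 0"
        using der by blast
      then obtain d where d: "d > 0" "\<And>h. h > 0 \<Longrightarrow> h < d \<Longrightarrow> f (Sup S + h) < f (Sup S)"
        using DERIV_neg_dec_right by blast
      obtain h where h: "0 < h" "h < d" "Sup S + h < b"
        using field_lbound_gt_zero[OF d(1), of "b - Sup S"] \<open>Sup S < b\<close> by auto
      have "f (Sup S + h) < y"
        using d(2)[OF h(1,2)] x unfolding S_def by simp
      then obtain w where w: "Sup S + h \<le> w" "w \<le> b" "f w = y"
        using IVT'[of f "Sup S + h" y b] y h(3) continuous_on_subset[OF cont] \<open>a < Sup S\<close> h(1)
        by (auto simp: subset_iff)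
      then have "w \<in> S"
        using \<open>a < Sup S\<close> h(1) unfolding S_def by auto
      then show False
        using cSup_upper[OF _ bdd, of w] w(1) h(1) by simp
    qed
    then show "y \<in> f ` Z"
      using x unfolding S_def by (metis (mono_tags, lifting) image_eqI mem_Collect_eq)
  qed
  then have "negligible {f a<..<f b}"
    using Z negligible_subset by blast
  then show False
    using negligible_interval(2)[of "f a" "f b"] \<open>\<not> f b \<le> f a\<close> by (simp add: box_real)
qed

lemma abs_diff_sub_linear_le_set_integral:
  fixes f k :: "real \<Rightarrow> real"
  assumes "set_integrable lborel {x..y} k" "\<bar>f y - f x\<bar> \<le> (LINT t:{x..y}|lborel. k t)"
    and "x \<le> y" "0 \<le> \<eta>"
  shows "\<bar>(f y - \<eta> * y) - (f x - \<eta> * x)\<bar> \<le> (LINT t:{x..y}|lborel. k t + \<eta>)"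
proof -
  have "(LINT t:{x..y}|lborel. k t + \<eta>) = (LINT t:{x..y}|lborel. k t) + \<eta> * (y - x)"
    using assms by (simp add: set_integral_add(2) borel_integrable_atLeastAtMost' set_integral_const)
  moreover have "0 \<le> \<eta> * (y - x)"
    using assms by simp
  ultimately show ?thesis
    using assms(2) by (simp add: abs_le_iff algebra_simps)
qed

lemma DERIV_nonpos_AE_imp_nonincreasing:
  fixes f k :: "real \<Rightarrow> real"
  assumes "a \<le> b" and cont: "continuous_on {a..b} f"
    and k: "set_integrable lborel {a..b} k" and k0: "\<And>x. x \<in> {a..b} \<Longrightarrow> 0 \<le> k x"
    and bnd: "\<And>x y. a \<le> x \<Longrightarrow> x \<le> y \<Longrightarrow> y \<le> b \<Longrightarrow> \<bar>f y - f x\<bar> \<le> (LINT t:{x..y}|lborel. k t)"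
    and der: "AE x in lborel. a < x \<and> x < b \<longrightarrow> (\<exists>D. DERIV f x :> D \<and> D \<le> 0)"
  shows "f b \<le> f a"
proof -
  from der obtain N where N: "N \<in> null_sets lborel"
    and N_sub: "{x \<in> space lborel. \<not> (a < x \<and> x < b \<longrightarrow> (\<exists>D. DERIV f x :> D \<and> D \<le> 0))} \<subseteq> N"
    by (rule AE_E) (auto simp: null_sets_def)
  have der_N: "\<exists>D. DERIV f x :> D \<and> D \<le> 0" if "a < x" "x < b" "x \<notin> N" for x
    using N_sub that unfolding space_lborel space_borel by blast
  have "negligible N"
    using N by (simp add: negligible_iff_null_sets null_sets_completionI)
  then have N_neg: "negligible (N \<inter> {a<..<b})"
    by (rule negligible_subset) auto
  have perturbed: "f b - f a \<le> \<eta> * (b - a)" if "\<eta> > 0" for \<eta>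
  proof -
    \<comment> \<open>Subtracting \<open>\<eta> x\<close> makes the derivative negative off a null set, whose image is null.\<close>
    define g where "g x = f x - \<eta> * x" for x
    have k\<eta>: "set_integrable lborel {a..b} (\<lambda>t. k t + \<eta>)"
      by (intro set_integral_add(1) k borel_integrable_atLeastAtMost' continuous_on_const)
    have bnd\<eta>: "\<bar>g y - g x\<bar> \<le> (LINT t:{x..y}|lborel. k t + \<eta>)"
      if "a \<le> x" "x \<le> y" "y \<le> b" for x y
      unfolding g_def using set_integrable_subset[OF k, of "{x..y}"] bnd[OF that] that \<open>\<eta> > 0\<close>
      by (intro abs_diff_sub_linear_le_set_integral) auto
    have g_null: "negligible (g ` (N \<inter> {a<..<b}))"
      using k0 \<open>\<eta> > 0\<close> by (intro negligible_image_if_increments_dominated[OF k\<eta> _ bnd\<eta> N_neg]) auto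
    have g_der: "\<exists>D. DERIV g x :> D \<and> D < 0" if x: "a < x" "x < b" "x \<notin> N \<inter> {a<..<b}" for x
    proof -
      obtain D where "DERIV f x :> D" "D \<le> 0"
        using der_N[of x] x by (meson IntI greaterThanLessThan_iff)
      then have "DERIV g x :> D - \<eta>"
        unfolding g_def by (auto intro!: derivative_eq_intros)
      then show ?thesis
        using \<open>D \<le> 0\<close> \<open>\<eta> > 0\<close> by (intro exI[of _ "D - \<eta>"]) simp
    qed
    have "continuous_on {a..b} g"
      unfolding g_def by (intro continuous_intros cont)
    then have "g b \<le> g a"
      by (rule DERIV_neg_off_null_image_imp_nonincreasing[OF \<open>a \<le> b\<close> _ g_null g_der])
    then show ?thesis
      unfolding g_def by (simp add: algebra_simps)
  qed
  show ?thesis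
  proof (cases "a = b")
    case False
    then have "f b - f a \<le> e" if "e > 0" for e
      using perturbed[of "e / (b - a)"] that \<open>a \<le> b\<close> by simp
    then show ?thesis
      using field_le_epsilon[of "f b - f a" 0] by simp
  qed simp
qed

lemma set_integrable_sum:
  fixes f :: "'i \<Rightarrow> 'a \<Rightarrow> real"
  assumes "\<And>i. i \<in> I \<Longrightarrow> set_integrable M A (f i)"
  shows "set_integrable M A (\<lambda>x. \<Sum>i\<in>I. f i x)"
  using assms unfolding set_integrable_def scaleR_sum_right by (rule Bochner_Integration.integrable_sum)

lemma set_integral_sum:
  fixes f :: "'i \<Rightarrow> 'a \<Rightarrow> real"
  assumes "\<And>i. i \<in> I \<Longrightarrow> set_integrable M A (f i)"
  shows "(LINT x:A|M. (\<Sum>i\<in>I. f i x)) = (\<Sum>i\<in>I. LINT x:A|M. f i x)"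
  using assms unfolding set_integrable_def set_lebesgue_integral_def scaleR_sum_right
  by (rule Bochner_Integration.integral_sum)

lemma sum_mult_abs_increment_le_set_integral:
  fixes g G :: "'i \<Rightarrow> real \<Rightarrow> real"
  assumes L: "\<And>i. i \<in> I \<Longrightarrow> 0 \<le> L i"
    and G: "\<And>i. i \<in> I \<Longrightarrow> set_integrable lborel {x..y} (G i)"
    and g: "\<And>i. i \<in> I \<Longrightarrow> g i y - g i x = (LINT t:{x..y}|lborel. G i t)"
  shows "(\<Sum>i\<in>I. L i * \<bar>g i y - g i x\<bar>) \<le> (LINT t:{x..y}|lborel. \<Sum>i\<in>I. L i * \<bar>G i t\<bar>)"
proof -
  have "(\<Sum>i\<in>I. L i * \<bar>g i y - g i x\<bar>) \<le> (\<Sum>i\<in>I. L i * (LINT t:{x..y}|lborel. \<bar>G i t\<bar>))"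
    using set_integral_norm_bound[OF G] L g by (intro sum_mono mult_left_mono) auto
  also have "\<dots> = (LINT t:{x..y}|lborel. \<Sum>i\<in>I. L i * \<bar>G i t\<bar>)"
    using G by (simp add: set_integral_sum set_integrable_abs)
  finally show ?thesis .
qed

section \<open>The Ginzburg--Landau energy on \<open>V01\<close>\<close>

definition GL_real :: "('v::finite \<Rightarrow> 'v \<Rightarrow> real) \<Rightarrow> real \<Rightarrow> real \<Rightarrow> ('v \<Rightarrow> real) \<Rightarrow> real" where
  "GL_real \<omega> r \<epsilon> p = 1/4 * (\<Sum>i\<in>UNIV. \<Sum>j\<in>UNIV. \<omega> i j * (p j - p i)^2)
     + 1/\<epsilon> * (\<Sum>i\<in>UNIV. degr \<omega> r i * (p i * (1 - p i) / 2))"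

lemma wgraph_nonneg: "wgraph \<omega> \<Longrightarrow> 0 \<le> \<omega> i j"
  unfolding wgraph_def by blast

lemma wgraph_sym: "wgraph \<omega> \<Longrightarrow> \<omega> i j = \<omega> j i"
  unfolding wgraph_def by blast

lemma deg_nonneg: "wgraph \<omega> \<Longrightarrow> 0 \<le> deg \<omega> i"
  unfolding deg_def by (intro sum_nonneg) (simp add: wgraph_nonneg)

lemma degr_nonneg: "0 \<le> degr \<omega> r i"
  unfolding degr_def by simp

lemma sum_sum_weight_swap:
  assumes "wgraph \<omega>"
  shows "(\<Sum>i\<in>UNIV. \<Sum>j\<in>UNIV. \<omega> i j * F i j) = (\<Sum>i\<in>UNIV. \<Sum>j\<in>UNIV. \<omega> i j * F j i)"
  by (subst sum.swap) (simp add: wgraph_sym[OF assms])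

lemma sum_sum_weight_diff_eq_0:
  assumes "wgraph \<omega>"
  shows "(\<Sum>i\<in>UNIV. \<Sum>j\<in>UNIV. \<omega> i j * (p i - p j)) = (0::real)"
proof -
  have "(\<Sum>i\<in>UNIV. \<Sum>j\<in>UNIV. \<omega> i j * (p i - p j)) = (\<Sum>i\<in>UNIV. \<Sum>j\<in>UNIV. \<omega> i j * (p j - p i))"
    by (rule sum_sum_weight_swap[OF assms])
  also have "\<dots> = - (\<Sum>i\<in>UNIV. \<Sum>j\<in>UNIV. \<omega> i j * (p i - p j))"
    by (simp add: sum_negf[symmetric] algebra_simps)
  finally show ?thesis by simp
qed

lemma discrete_green_identity:
  assumes "wgraph \<omega>"
  shows "1/2 * (\<Sum>i\<in>UNIV. \<Sum>j\<in>UNIV. \<omega> i j * (p j - p i) * (h j - h i))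
       = (\<Sum>i\<in>UNIV. h i * (\<Sum>j\<in>UNIV. \<omega> i j * (p i - p j)))"
proof -
  have "(\<Sum>i\<in>UNIV. \<Sum>j\<in>UNIV. \<omega> i j * ((p j - p i) * h j))
      = (\<Sum>i\<in>UNIV. \<Sum>j\<in>UNIV. \<omega> i j * ((p i - p j) * h i))"
    by (rule sum_sum_weight_swap[OF assms])
  then have "(\<Sum>i\<in>UNIV. \<Sum>j\<in>UNIV. \<omega> i j * (p j - p i) * (h j - h i))
      = 2 * (\<Sum>i\<in>UNIV. \<Sum>j\<in>UNIV. \<omega> i j * ((p i - p j) * h i))"
    by (simp add: algebra_simps sum_subtractf sum.distrib)
  then show ?thesis
    by (simp add: sum_distrib_left algebra_simps)
qed

lemma degr_mult_lap:
  assumes "wgraph \<omega>"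
  shows "degr \<omega> r i * lap \<omega> r p i = (\<Sum>j\<in>UNIV. \<omega> i j * (p i - p j))"
proof (cases "degr \<omega> r i = 0")
  case True
  then have "deg \<omega> i = 0"
    unfolding degr_def by (auto split: if_splits)
  then have "\<omega> i j = 0" for j
    using sum_nonneg_eq_0_iff[of UNIV "\<omega> i"] wgraph_nonneg[OF assms] unfolding deg_def by auto
  then show ?thesis
    using True by simp
qed (simp add: lap_def)

lemma sum_degr_mult_diff_avg:
  "(\<Sum>i\<in>UNIV. degr \<omega> r i * (q i - avg \<omega> r q)) = 0"
proof (cases "(\<Sum>i\<in>UNIV. degr \<omega> r i) = 0")
  case True
  then have "degr \<omega> r i = 0" for i
    using sum_nonneg_eq_0_iff[of UNIV "degr \<omega> r"] degr_nonneg[of \<omega> r] by simp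
  then show ?thesis by simp
next
  case False
  have "mass \<omega> r q = (\<Sum>i\<in>UNIV. degr \<omega> r i * q i)" "mass \<omega> r (\<lambda>_. 1) = (\<Sum>i\<in>UNIV. degr \<omega> r i)"
    unfolding mass_def innerV_def by (simp_all add: mult.commute)
  then have "avg \<omega> r q * (\<Sum>i\<in>UNIV. degr \<omega> r i) = (\<Sum>i\<in>UNIV. degr \<omega> r i * q i)"
    using False unfolding avg_def by simp
  then show ?thesis
    by (simp add: algebra_simps sum_subtractf sum_distrib_left)
qed

lemma normV_square: "(normV \<omega> r w)^2 = (\<Sum>i\<in>UNIV. degr \<omega> r i * (w i)^2)"
proof -
  have "innerV \<omega> r w w = (\<Sum>i\<in>UNIV. degr \<omega> r i * (w i)^2)"
    unfolding innerV_def by (simp add: power2_eq_square algebra_simps)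
  moreover have "0 \<le> (\<Sum>i\<in>UNIV. degr \<omega> r i * (w i)^2)"
    by (intro sum_nonneg mult_nonneg_nonneg degr_nonneg) auto
  ultimately show ?thesis
    unfolding normV_def by simp
qed

lemma GL_eq_GL_real:
  assumes wg: "wgraph \<omega>" and p: "p \<in> V01"
  shows "GL \<omega> r \<epsilon> p = ereal (GL_real \<omega> r \<epsilon> p)"
proof -
  have "grad \<omega> p i j * grad \<omega> p i j * \<omega> i j = \<omega> i j * (p j - p i)^2" for i j
    using wgraph_nonneg[OF wg, of i j] by (cases "0 < \<omega> i j") (auto simp: grad_def power2_eq_square)
  then have "innerE \<omega> (grad \<omega> p) (grad \<omega> p) = 1/2 * (\<Sum>i\<in>UNIV. \<Sum>j\<in>UNIV. \<omega> i j * (p j - p i)^2)"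
    unfolding innerE_def by presburger
  moreover have "0 \<le> (\<Sum>i\<in>UNIV. \<Sum>j\<in>UNIV. \<omega> i j * (p j - p i)^2)"
    by (intro sum_nonneg mult_nonneg_nonneg) (auto simp: wgraph_nonneg[OF wg])
  ultimately have "(normE \<omega> (grad \<omega> p))^2 = 1/2 * (\<Sum>i\<in>UNIV. \<Sum>j\<in>UNIV. \<omega> i j * (p j - p i)^2)"
    unfolding normE_def by simp
  moreover have "Wdo (p i) = ereal (p i * (1 - p i) / 2)" for i
    using p unfolding V01_def Wdo_def by auto
  ultimately show ?thesis
    unfolding GL_def GL_real_def by (simp add: sum_ereal)
qed

lemma abs_square_diff_sub_square_diff_le:
  fixes a b c e :: real
  assumes "a \<in> {0..1}" "b \<in> {0..1}" "c \<in> {0..1}" "e \<in> {0..1}"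
  shows "\<bar>(a - b)^2 - (c - e)^2\<bar> \<le> 2 * (\<bar>a - c\<bar> + \<bar>b - e\<bar>)"
proof -
  have "\<bar>(a - b)^2 - (c - e)^2\<bar> = \<bar>(a - c) - (b - e)\<bar> * \<bar>(a - b) + (c - e)\<bar>"
    by (simp add: power2_eq_square algebra_simps flip: abs_mult)
  also have "\<dots> \<le> (\<bar>a - c\<bar> + \<bar>b - e\<bar>) * 2"
    using assms by (intro mult_mono abs_triangle_ineq4) (auto simp: abs_le_iff)
  finally show ?thesis
    by simp
qed

lemma abs_dirichlet_diff_le:
  assumes wg: "wgraph \<omega>" and "p \<in> V01" "q \<in> V01"
  shows "\<bar>(\<Sum>i\<in>UNIV. \<Sum>j\<in>UNIV. \<omega> i j * (p j - p i)^2) - (\<Sum>i\<in>UNIV. \<Sum>j\<in>UNIV. \<omega> i j * (q j - q i)^2)\<bar>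
    \<le> 4 * (\<Sum>i\<in>UNIV. deg \<omega> i * \<bar>p i - q i\<bar>)"
proof -
  have "\<bar>(\<Sum>i\<in>UNIV. \<Sum>j\<in>UNIV. \<omega> i j * (p j - p i)^2) - (\<Sum>i\<in>UNIV. \<Sum>j\<in>UNIV. \<omega> i j * (q j - q i)^2)\<bar>
      = \<bar>\<Sum>i\<in>UNIV. \<Sum>j\<in>UNIV. \<omega> i j * ((p j - p i)^2 - (q j - q i)^2)\<bar>"
    by (simp add: sum_subtractf algebra_simps)
  also have "\<dots> \<le> (\<Sum>i\<in>UNIV. \<Sum>j\<in>UNIV. \<bar>\<omega> i j * ((p j - p i)^2 - (q j - q i)^2)\<bar>)"
    by (rule order_trans[OF sum_abs sum_mono[OF sum_abs]])
  also have "\<dots> \<le> (\<Sum>i\<in>UNIV. \<Sum>j\<in>UNIV. \<omega> i j * (2 * (\<bar>p j - q j\<bar> + \<bar>p i - q i\<bar>)))"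
  proof (intro sum_mono)
    fix i j
    have "\<bar>(p j - p i)^2 - (q j - q i)^2\<bar> \<le> 2 * (\<bar>p j - q j\<bar> + \<bar>p i - q i\<bar>)"
      using assms(2,3) unfolding V01_def by (intro abs_square_diff_sub_square_diff_le) auto
    then show "\<bar>\<omega> i j * ((p j - p i)^2 - (q j - q i)^2)\<bar> \<le> \<omega> i j * (2 * (\<bar>p j - q j\<bar> + \<bar>p i - q i\<bar>))"
      using wgraph_nonneg[OF wg, of i j] by (simp add: abs_mult mult_left_mono)
  qed
  also have "\<dots> = 2 * (\<Sum>i\<in>UNIV. \<Sum>j\<in>UNIV. \<omega> i j * \<bar>p j - q j\<bar>) + 2 * (\<Sum>i\<in>UNIV. \<Sum>j\<in>UNIV. \<omega> i j * \<bar>p i - q i\<bar>)"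
    by (simp add: sum.distrib sum_distrib_left algebra_simps)
  also have "(\<Sum>i\<in>UNIV. \<Sum>j\<in>UNIV. \<omega> i j * \<bar>p j - q j\<bar>) = (\<Sum>i\<in>UNIV. \<Sum>j\<in>UNIV. \<omega> i j * \<bar>p i - q i\<bar>)"
    by (rule sum_sum_weight_swap[OF wg])
  also have "(\<Sum>i\<in>UNIV. \<Sum>j\<in>UNIV. \<omega> i j * \<bar>p i - q i\<bar>) = (\<Sum>i\<in>UNIV. deg \<omega> i * \<bar>p i - q i\<bar>)"
    unfolding deg_def by (simp add: sum_distrib_right)
  finally show ?thesis
    by simp
qed

lemma abs_potential_diff_le:
  assumes "p \<in> V01" "q \<in> V01"
  shows "\<bar>(\<Sum>i\<in>UNIV. degr \<omega> r i * (p i * (1 - p i) / 2)) - (\<Sum>i\<in>UNIV. degr \<omega> r i * (q i * (1 - q i) / 2))\<bar>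
    \<le> (\<Sum>i\<in>UNIV. degr \<omega> r i / 2 * \<bar>p i - q i\<bar>)"
proof -
  have "\<bar>p i * (1 - p i) - q i * (1 - q i)\<bar> \<le> \<bar>p i - q i\<bar>" for i
  proof -
    have "0 \<le> p i \<and> p i \<le> 1" "0 \<le> q i \<and> q i \<le> 1"
      using assms unfolding V01_def by blast+
    then have "\<bar>1 - p i - q i\<bar> \<le> 1"
      by (simp add: abs_le_iff)
    moreover have "\<bar>p i * (1 - p i) - q i * (1 - q i)\<bar> = \<bar>p i - q i\<bar> * \<bar>1 - p i - q i\<bar>"
      by (simp add: algebra_simps flip: abs_mult)
    ultimately show ?thesis
      by (simp add: mult_left_le)
  qed
  then have "\<bar>degr \<omega> r i * (p i * (1 - p i) / 2) - degr \<omega> r i * (q i * (1 - q i) / 2)\<bar>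
      \<le> degr \<omega> r i / 2 * \<bar>p i - q i\<bar>" for i
    using degr_nonneg[of \<omega> r i]
    by (simp add: abs_mult mult_left_mono flip: right_diff_distrib diff_divide_distrib)
  then show ?thesis
    unfolding sum_subtractf[symmetric] by (rule order_trans[OF sum_abs sum_mono])
qed

lemma GL_real_lipschitz:
  assumes wg: "wgraph \<omega>" and "0 < \<epsilon>" and pq: "p \<in> V01" "q \<in> V01"
  shows "\<bar>GL_real \<omega> r \<epsilon> p - GL_real \<omega> r \<epsilon> q\<bar> \<le> (\<Sum>i\<in>UNIV. (deg \<omega> i + degr \<omega> r i / (2 * \<epsilon>)) * \<bar>p i - q i\<bar>)"
proof -
  define E where "E u = (\<Sum>i\<in>UNIV. \<Sum>j\<in>UNIV. \<omega> i j * (u j - u i)^2)" for u :: "'a \<Rightarrow> real"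
  define P where "P u = (\<Sum>i\<in>UNIV. degr \<omega> r i * (u i * (1 - u i) / 2))" for u :: "'a \<Rightarrow> real"
  have "\<bar>GL_real \<omega> r \<epsilon> p - GL_real \<omega> r \<epsilon> q\<bar> = \<bar>1/4 * (E p - E q) + 1/\<epsilon> * (P p - P q)\<bar>"
    unfolding GL_real_def E_def P_def by (simp add: algebra_simps)
  also have "\<dots> \<le> 1/4 * \<bar>E p - E q\<bar> + 1/\<epsilon> * \<bar>P p - P q\<bar>"
    using \<open>0 < \<epsilon>\<close> abs_triangle_ineq[of "1/4 * (E p - E q)" "1/\<epsilon> * (P p - P q)"]
    by (simp add: abs_mult)
  also have "\<dots> \<le> 1/4 * (4 * (\<Sum>i\<in>UNIV. deg \<omega> i * \<bar>p i - q i\<bar>)) + 1/\<epsilon> * (\<Sum>i\<in>UNIV. degr \<omega> r i / 2 * \<bar>p i - q i\<bar>)"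
    using abs_dirichlet_diff_le[OF wg pq] abs_potential_diff_le[OF pq, of \<omega> r] \<open>0 < \<epsilon>\<close>
    unfolding E_def P_def by (intro add_mono mult_left_mono) auto
  also have "\<dots> = (\<Sum>i\<in>UNIV. (deg \<omega> i + degr \<omega> r i / (2 * \<epsilon>)) * \<bar>p i - q i\<bar>)"
    by (simp add: sum.distrib sum_distrib_left algebra_simps)
  finally show ?thesis .
qed

lemma GL_real_plus_linear_lipschitz:
  assumes wg: "wgraph \<omega>" and "0 < \<epsilon>" and pq: "p \<in> V01" "q \<in> V01"
  shows "\<bar>(GL_real \<omega> r \<epsilon> p + 2 * (\<Sum>i\<in>UNIV. degr \<omega> r i * p i * v i))
      - (GL_real \<omega> r \<epsilon> q + 2 * (\<Sum>i\<in>UNIV. degr \<omega> r i * q i * v i))\<bar>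
    \<le> (\<Sum>i\<in>UNIV. (deg \<omega> i + degr \<omega> r i / (2 * \<epsilon>) + 2 * degr \<omega> r i * \<bar>v i\<bar>) * \<bar>p i - q i\<bar>)"
proof -
  define B where "B w = 2 * (\<Sum>i\<in>UNIV. degr \<omega> r i * w i * v i)" for w :: "'a \<Rightarrow> real"
  have "\<bar>B p - B q\<bar> = \<bar>\<Sum>i\<in>UNIV. 2 * degr \<omega> r i * v i * (p i - q i)\<bar>"
    unfolding B_def by (simp add: sum_distrib_left sum_subtractf[symmetric] algebra_simps)
  also have "\<dots> \<le> (\<Sum>i\<in>UNIV. 2 * degr \<omega> r i * \<bar>v i\<bar> * \<bar>p i - q i\<bar>)"
    by (rule order_trans[OF sum_abs]) (simp add: abs_mult degr_nonneg)
  finally have "\<bar>B p - B q\<bar> \<le> (\<Sum>i\<in>UNIV. 2 * degr \<omega> r i * \<bar>v i\<bar> * \<bar>p i - q i\<bar>)" .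
  moreover have "\<bar>(GL_real \<omega> r \<epsilon> p + B p) - (GL_real \<omega> r \<epsilon> q + B q)\<bar>
      \<le> \<bar>GL_real \<omega> r \<epsilon> p - GL_real \<omega> r \<epsilon> q\<bar> + \<bar>B p - B q\<bar>"
    using abs_triangle_ineq[of "GL_real \<omega> r \<epsilon> p - GL_real \<omega> r \<epsilon> q" "B p - B q"] by (simp add: algebra_simps)
  ultimately have "\<bar>(GL_real \<omega> r \<epsilon> p + B p) - (GL_real \<omega> r \<epsilon> q + B q)\<bar>
      \<le> (\<Sum>i\<in>UNIV. (deg \<omega> i + degr \<omega> r i / (2 * \<epsilon>)) * \<bar>p i - q i\<bar>)
        + (\<Sum>i\<in>UNIV. 2 * degr \<omega> r i * \<bar>v i\<bar> * \<bar>p i - q i\<bar>)"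
    using GL_real_lipschitz[OF wg \<open>0 < \<epsilon>\<close> pq, of r] by linarith
  then show ?thesis
    unfolding B_def by (simp add: sum.distrib[symmetric] algebra_simps)
qed

definition GL_tilted :: "('v::finite \<Rightarrow> 'v \<Rightarrow> real) \<Rightarrow> real \<Rightarrow> real \<Rightarrow> ('v \<Rightarrow> real) \<Rightarrow> real \<Rightarrow> ('v \<Rightarrow> real) \<Rightarrow> real" where
  "GL_tilted \<omega> r \<epsilon> v y p = GL_real \<omega> r \<epsilon> p + 2 * (\<Sum>i\<in>UNIV. degr \<omega> r i * p i * v i)
     - y * (\<Sum>i\<in>UNIV. degr \<omega> r i * (v i)^2)"

lemma GL_tilted_increment_le:
  assumes wg: "wgraph \<omega>" and "0 < \<epsilon>" and pq: "p \<in> V01" "q \<in> V01" and "x \<le> y"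
  shows "\<bar>GL_tilted \<omega> r \<epsilon> v y p - GL_tilted \<omega> r \<epsilon> v x q\<bar>
    \<le> (\<Sum>i\<in>UNIV. (deg \<omega> i + degr \<omega> r i / (2 * \<epsilon>) + 2 * degr \<omega> r i * \<bar>v i\<bar>) * \<bar>p i - q i\<bar>)
      + (y - x) * (\<Sum>i\<in>UNIV. degr \<omega> r i * (v i)^2)"
proof -
  define \<Phi> where "\<Phi> w = GL_real \<omega> r \<epsilon> w + 2 * (\<Sum>i\<in>UNIV. degr \<omega> r i * w i * v i)" for w
  have "GL_tilted \<omega> r \<epsilon> v y p - GL_tilted \<omega> r \<epsilon> v x q = (\<Phi> p - \<Phi> q) - (y - x) * (\<Sum>i\<in>UNIV. degr \<omega> r i * (v i)^2)"
    unfolding GL_tilted_def \<Phi>_def by (simp add: algebra_simps)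
  moreover have "0 \<le> (y - x) * (\<Sum>i\<in>UNIV. degr \<omega> r i * (v i)^2)"
    using \<open>x \<le> y\<close> by (simp add: sum_nonneg degr_nonneg)
  ultimately show ?thesis
    using GL_real_plus_linear_lipschitz[OF wg \<open>0 < \<epsilon>\<close> pq, of r v]
      abs_triangle_ineq4[of "\<Phi> p - \<Phi> q" "(y - x) * (\<Sum>i\<in>UNIV. degr \<omega> r i * (v i)^2)"]
    unfolding \<Phi>_def by simp
qed

lemma GL_real_has_derivative:
  assumes der: "\<And>i. DERIV (\<lambda>y. U y i) x :> h i"
  shows "DERIV (\<lambda>y. GL_real \<omega> r \<epsilon> (U y)) x :>
     1/2 * (\<Sum>i\<in>UNIV. \<Sum>j\<in>UNIV. \<omega> i j * (U x j - U x i) * (h j - h i))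
       + 1/\<epsilon> * (\<Sum>i\<in>UNIV. degr \<omega> r i * (h i * (1 - 2 * U x i) / 2))"
proof -
  have dirichlet: "DERIV (\<lambda>y. \<omega> i j * (U y j - U y i)^2) x :> \<omega> i j * (2 * (U x j - U x i) * (h j - h i))" for i j
    by (auto intro!: derivative_eq_intros der)
  have potential: "DERIV (\<lambda>y. degr \<omega> r i * (U y i * (1 - U y i) / 2)) x :> degr \<omega> r i * (h i * (1 - 2 * U x i) / 2)" for i
    by (auto intro!: derivative_eq_intros der simp: field_simps)
  have "DERIV (\<lambda>y. GL_real \<omega> r \<epsilon> (U y)) x :>
     1/4 * (\<Sum>i\<in>UNIV. \<Sum>j\<in>UNIV. \<omega> i j * (2 * (U x j - U x i) * (h j - h i)))
       + 1/\<epsilon> * (\<Sum>i\<in>UNIV. degr \<omega> r i * (h i * (1 - 2 * U x i) / 2))"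
    unfolding GL_real_def by (intro DERIV_add DERIV_cmult DERIV_sum dirichlet potential)
  then show ?thesis
    by (simp add: sum_distrib_left algebra_simps)
qed

section \<open>Energy dissipation along the flow\<close>

lemma degr_mult_AC_equation:
  assumes wg: "wgraph \<omega>"
    and eq: "\<epsilon> * h i + \<epsilon> * lap \<omega> r p i - p i + avg \<omega> r p = \<beta> i - avg \<omega> r \<beta>"
  shows "\<epsilon> * (degr \<omega> r i * h i) + \<epsilon> * (\<Sum>j\<in>UNIV. \<omega> i j * (p i - p j))
      - degr \<omega> r i * (p i - avg \<omega> r p) = degr \<omega> r i * (\<beta> i - avg \<omega> r \<beta>)"
proof -
  have "degr \<omega> r i * (\<epsilon> * h i + \<epsilon> * lap \<omega> r p i - p i + avg \<omega> r p) = degr \<omega> r i * (\<beta> i - avg \<omega> r \<beta>)"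
    using eq by simp
  then show ?thesis
    using degr_mult_lap[OF wg, of r i p] by (simp add: algebra_simps)
qed

lemma sum_degr_mult_velocity_eq_0:
  assumes wg: "wgraph \<omega>" and "\<epsilon> \<noteq> 0"
    and eq: "\<And>i. \<epsilon> * h i + \<epsilon> * lap \<omega> r p i - p i + avg \<omega> r p = \<beta> i - avg \<omega> r \<beta>"
  shows "(\<Sum>i\<in>UNIV. degr \<omega> r i * h i) = 0"
proof -
  have "(\<Sum>i\<in>UNIV. \<epsilon> * (degr \<omega> r i * h i) + \<epsilon> * (\<Sum>j\<in>UNIV. \<omega> i j * (p i - p j))
      - degr \<omega> r i * (p i - avg \<omega> r p)) = (\<Sum>i\<in>UNIV. degr \<omega> r i * (\<beta> i - avg \<omega> r \<beta>))"
    by (intro sum.cong refl degr_mult_AC_equation wg eq)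
  then have "\<epsilon> * (\<Sum>i\<in>UNIV. degr \<omega> r i * h i) = 0"
    unfolding sum.distrib sum_subtractf sum_distrib_left[symmetric]
    by (simp add: sum_degr_mult_diff_avg sum_sum_weight_diff_eq_0[OF wg])
  then show ?thesis
    using \<open>\<epsilon> \<noteq> 0\<close> by simp
qed

lemma energy_dissipation_identity:
  assumes wg: "wgraph \<omega>" and "\<epsilon> \<noteq> 0"
    and eq: "\<And>i. \<epsilon> * h i + \<epsilon> * lap \<omega> r p i - p i + avg \<omega> r p = \<beta> i - avg \<omega> r \<beta>"
    and complementary: "\<And>i. h i * \<beta> i = 0"
  shows "1/2 * (\<Sum>i\<in>UNIV. \<Sum>j\<in>UNIV. \<omega> i j * (p j - p i) * (h j - h i))
       + 1/\<epsilon> * (\<Sum>i\<in>UNIV. degr \<omega> r i * (h i * (1 - 2 * p i) / 2))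
       = - (\<Sum>i\<in>UNIV. degr \<omega> r i * (h i)^2)"
proof -
  define d where "d i = degr \<omega> r i" for i
  define c where "c i = (\<Sum>j\<in>UNIV. \<omega> i j * (p i - p j))" for i
  define K where "K = (1/2 - avg \<omega> r p - avg \<omega> r \<beta>) / \<epsilon>"
  have pointwise: "h i * c i + 1/\<epsilon> * (d i * (h i * (1 - 2 * p i) / 2)) = - (d i * (h i)^2) + K * (d i * h i)" for i
  proof -
    have "h i * (\<epsilon> * (d i * h i) + \<epsilon> * c i - d i * (p i - avg \<omega> r p)) = h i * (d i * (\<beta> i - avg \<omega> r \<beta>))"
      using degr_mult_AC_equation[where h=h and p=p and \<beta>=\<beta>, OF wg eq] unfolding c_def d_def by simp
    also have "\<dots> = d i * (h i * \<beta> i) - d i * avg \<omega> r \<beta> * h i"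
      by (simp add: algebra_simps)
    also have "\<dots> = - d i * avg \<omega> r \<beta> * h i"
      using complementary[of i] by simp
    finally have "\<epsilon> * (d i * (h i)^2) + \<epsilon> * (h i * c i) - h i * d i * (p i - avg \<omega> r p) = - d i * avg \<omega> r \<beta> * h i"
      by (simp add: algebra_simps power2_eq_square)
    then show ?thesis
      unfolding K_def using \<open>\<epsilon> \<noteq> 0\<close> by (simp add: field_simps)
  qed
  have "1/2 * (\<Sum>i\<in>UNIV. \<Sum>j\<in>UNIV. \<omega> i j * (p j - p i) * (h j - h i))
       + 1/\<epsilon> * (\<Sum>i\<in>UNIV. degr \<omega> r i * (h i * (1 - 2 * p i) / 2))
       = (\<Sum>i\<in>UNIV. h i * c i + 1/\<epsilon> * (d i * (h i * (1 - 2 * p i) / 2)))"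
    unfolding discrete_green_identity[OF wg] c_def d_def by (simp add: sum.distrib sum_distrib_left)
  also have "\<dots> = - (\<Sum>i\<in>UNIV. d i * (h i)^2) + K * (\<Sum>i\<in>UNIV. d i * h i)"
    unfolding pointwise by (simp add: sum.distrib sum_distrib_left sum_negf sum_subtractf)
  also have "(\<Sum>i\<in>UNIV. d i * h i) = 0"
    unfolding d_def by (rule sum_degr_mult_velocity_eq_0[OF wg \<open>\<epsilon> \<noteq> 0\<close> eq])
  finally show ?thesis
    unfolding d_def by simp
qed

lemma DERIV_mult_Bset_eq_0:
  assumes "0 < t" and V01: "\<And>s. 0 \<le> s \<Longrightarrow> u s \<in> V01"
    and der: "DERIV (\<lambda>s. u s i) t :> h" and \<beta>: "\<beta> \<in> Bset (u t)"
  shows "h * \<beta> i = 0"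
proof -
  have near: "0 \<le> u y i \<and> u y i \<le> 1" if "\<bar>t - y\<bar> < t" for y
    using V01[of y] that unfolding V01_def by auto
  consider "u t i = 0" | "0 < u t i \<and> u t i < 1" | "u t i = 1"
    using near[of t] \<open>0 < t\<close> by fastforce
  then show ?thesis
  proof cases
    case 1
    then have "h = 0"
      using near by (intro DERIV_local_min[OF der \<open>0 < t\<close>]) auto
    then show ?thesis by simp
  next
    case 2
    then show ?thesis
      using \<beta> unfolding Bset_def by auto
  next
    case 3
    then have "h = 0"
      using near by (intro DERIV_local_max[OF der \<open>0 < t\<close>]) auto
    then show ?thesis by simp
  qed
qed

lemma H1loc_increment:
  assumes "H1loc u"
  obtains G where "\<And>i x y. 0 \<le> x \<Longrightarrow> x \<le> y \<Longrightarrow> set_integrable lborel {x..y} (G i)"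
    and "\<And>i x y. 0 \<le> x \<Longrightarrow> x \<le> y \<Longrightarrow> u y i - u x i = (LINT s:{x..y}|lborel. G i s)"
proof -
  obtain G where G_int: "\<And>i T. 0 \<le> T \<Longrightarrow> set_integrable lborel {0..T} (G i)"
    and G_rep: "\<And>i t. 0 \<le> t \<Longrightarrow> u t i = u 0 i + (LINT s:{0..t}|lborel. G i s)"
    using assms unfolding H1loc_def by metis
  have int: "set_integrable lborel {x..y} (G i)" if "0 \<le> x" "x \<le> y" for i x y
    using that by (intro set_integrable_subset[OF G_int[of y]]) auto
  moreover have "u y i - u x i = (LINT s:{x..y}|lborel. G i s)" if xy: "0 \<le> x" "x \<le> y" for i x y
  proof -
    have "(LINT s:{0..x} \<union> {x..y}|lborel. G i s) = (LINT s:{0..x}|lborel. G i s) + (LINT s:{x..y}|lborel. G i s)"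
      using AE_lborel_singleton[of x] int[of 0 x] int[OF xy] xy
      by (intro set_integral_Un_AE) (auto elim!: eventually_mono)
    moreover have "{0..x} \<union> {x..y} = {0..y}"
      using xy by auto
    ultimately show ?thesis
      using G_rep[of x i] G_rep[of y i] xy by simp
  qed
  ultimately show thesis
    using that by blast
qed

text \<open>The derivative is \<open>-|u' - v|\<^sup>2\<close>, by the energy dissipation identity.\<close>

lemma ACsol_AE_DERIV_GL_tilted_nonpos:
  assumes wg: "wgraph \<omega>" and "0 < \<epsilon>" and AC: "ACsol \<omega> r \<epsilon> u \<gamma>"
  shows "AE x in lborel. 0 < x \<longrightarrow> (\<exists>D. DERIV (\<lambda>y. GL_tilted \<omega> r \<epsilon> v y (u y)) x :> D \<and> D \<le> 0)"
proof -
  have "\<epsilon> \<noteq> 0"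
    using \<open>0 < \<epsilon>\<close> by simp
  from AC have V01: "\<And>t. 0 \<le> t \<Longrightarrow> u t \<in> V01"
    and "AE t in lborel. 0 < t \<longrightarrow> (\<exists>h. (\<forall>i. DERIV (\<lambda>s. u s i) t :> h i) \<and> \<gamma> t \<in> Bset (u t)
          \<and> (\<forall>i. \<epsilon> * h i + \<epsilon> * lap \<omega> r (u t) i - u t i + avg \<omega> r (u t) = \<gamma> t i - avg \<omega> r (\<gamma> t)))"
    unfolding ACsol_def by auto
  then show ?thesis
  proof eventually_elim
    case (elim x)
    then have "0 < x"
      by blast
    from elim obtain h where der: "\<And>i. DERIV (\<lambda>s. u s i) x :> h i" and B: "\<gamma> x \<in> Bset (u x)"
      and eq: "\<And>i. \<epsilon> * h i + \<epsilon> * lap \<omega> r (u x) i - u x i + avg \<omega> r (u x) = \<gamma> x i - avg \<omega> r (\<gamma> x)"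
      by blast
    have compl: "h i * \<gamma> x i = 0" for i
      by (rule DERIV_mult_Bset_eq_0[where u=u, OF \<open>0 < x\<close> V01 der B])
    have "DERIV (\<lambda>y. GL_real \<omega> r \<epsilon> (u y)) x :> - (\<Sum>i\<in>UNIV. degr \<omega> r i * (h i)^2)"
      using GL_real_has_derivative[where U=u and \<omega>=\<omega> and r=r and \<epsilon>=\<epsilon>, OF der]
      unfolding energy_dissipation_identity[OF wg \<open>\<epsilon> \<noteq> 0\<close> eq compl] .
    moreover have "DERIV (\<lambda>y. 2 * (\<Sum>i\<in>UNIV. degr \<omega> r i * u y i * v i)) x :> 2 * (\<Sum>i\<in>UNIV. degr \<omega> r i * h i * v i)"
      by (intro DERIV_cmult DERIV_sum) (auto intro!: derivative_eq_intros der)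
    moreover have "DERIV (\<lambda>y. y * (\<Sum>i\<in>UNIV. degr \<omega> r i * (v i)^2)) x :> (\<Sum>i\<in>UNIV. degr \<omega> r i * (v i)^2)"
      by (auto intro!: derivative_eq_intros)
    ultimately have "DERIV (\<lambda>y. GL_real \<omega> r \<epsilon> (u y) + 2 * (\<Sum>i\<in>UNIV. degr \<omega> r i * u y i * v i)
          - y * (\<Sum>i\<in>UNIV. degr \<omega> r i * (v i)^2)) x
        :> - (\<Sum>i\<in>UNIV. degr \<omega> r i * (h i)^2) + 2 * (\<Sum>i\<in>UNIV. degr \<omega> r i * h i * v i) - (\<Sum>i\<in>UNIV. degr \<omega> r i * (v i)^2)"
      by (intro DERIV_diff DERIV_add)
    also have "- (\<Sum>i\<in>UNIV. degr \<omega> r i * (h i)^2) + 2 * (\<Sum>i\<in>UNIV. degr \<omega> r i * h i * v i) - (\<Sum>i\<in>UNIV. degr \<omega> r i * (v i)^2)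
        = - (\<Sum>i\<in>UNIV. degr \<omega> r i * (h i - v i)^2)"
      by (simp add: power2_eq_square algebra_simps sum.distrib sum_subtractf sum_distrib_left sum_negf)
    finally have "DERIV (\<lambda>y. GL_tilted \<omega> r \<epsilon> v y (u y)) x :> - (\<Sum>i\<in>UNIV. degr \<omega> r i * (h i - v i)^2)"
      unfolding GL_tilted_def .
    moreover have "- (\<Sum>i\<in>UNIV. degr \<omega> r i * (h i - v i)^2) \<le> 0"
      by (simp add: sum_nonneg degr_nonneg)
    ultimately show ?case
      by blast
  qed
qed

lemma ACsol_GL_tilted_nonincreasing:
  assumes wg: "wgraph \<omega>" and "0 < \<epsilon>" and AC: "ACsol \<omega> r \<epsilon> u \<gamma>" and "0 \<le> s" "s \<le> t"
  shows "GL_tilted \<omega> r \<epsilon> v t (u t) \<le> GL_tilted \<omega> r \<epsilon> v s (u s)"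
proof -
  from AC have cont: "\<And>i. continuous_on {0..} (\<lambda>t. u t i)" and V01: "\<And>t. 0 \<le> t \<Longrightarrow> u t \<in> V01"
    and H1: "H1loc u"
    unfolding ACsol_def by auto
  obtain G where G_int: "\<And>i x y. 0 \<le> x \<Longrightarrow> x \<le> y \<Longrightarrow> set_integrable lborel {x..y} (G i)"
    and G_inc: "\<And>i x y. 0 \<le> x \<Longrightarrow> x \<le> y \<Longrightarrow> u y i - u x i = (LINT s:{x..y}|lborel. G i s)"
    using H1loc_increment[OF H1] by blast
  define V2 where "V2 = (\<Sum>i\<in>UNIV. degr \<omega> r i * (v i)^2)"
  define L where "L i = deg \<omega> i + degr \<omega> r i / (2 * \<epsilon>) + 2 * degr \<omega> r i * \<bar>v i\<bar>" for i
  define k where "k \<tau> = (\<Sum>i\<in>UNIV. L i * \<bar>G i \<tau>\<bar>) + V2" for \<tau>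
  have V2_nonneg: "0 \<le> V2"
    unfolding V2_def by (simp add: sum_nonneg degr_nonneg)
  have L_nonneg: "0 \<le> L i" for i
    unfolding L_def using deg_nonneg[OF wg, of i] degr_nonneg[of \<omega> r i] \<open>0 < \<epsilon>\<close> by simp
  have sum_int: "set_integrable lborel {x..y} (\<lambda>\<tau>. \<Sum>i\<in>UNIV. L i * \<bar>G i \<tau>\<bar>)" if "s \<le> x" "x \<le> y" for x y
    using that \<open>0 \<le> s\<close> by (intro set_integrable_sum set_integrable_mult_right set_integrable_abs G_int) auto
  have const_int: "set_integrable lborel {x..y} (\<lambda>\<tau>. V2)" for x y :: real
    by (intro borel_integrable_atLeastAtMost' continuous_on_const)
  have bnd: "\<bar>GL_tilted \<omega> r \<epsilon> v y (u y) - GL_tilted \<omega> r \<epsilon> v x (u x)\<bar> \<le> (LINT \<tau>:{x..y}|lborel. k \<tau>)"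
    if xy: "s \<le> x" "x \<le> y" for x y
  proof -
    have "u y \<in> V01" "u x \<in> V01"
      using V01 xy \<open>0 \<le> s\<close> by auto
    then have "\<bar>GL_tilted \<omega> r \<epsilon> v y (u y) - GL_tilted \<omega> r \<epsilon> v x (u x)\<bar>
        \<le> (\<Sum>i\<in>UNIV. L i * \<bar>u y i - u x i\<bar>) + (y - x) * V2"
      unfolding L_def V2_def by (rule GL_tilted_increment_le[OF wg \<open>0 < \<epsilon>\<close> _ _ xy(2)])
    also have "\<dots> \<le> (LINT \<tau>:{x..y}|lborel. \<Sum>i\<in>UNIV. L i * \<bar>G i \<tau>\<bar>) + (LINT \<tau>:{x..y}|lborel. V2)"
      using xy \<open>0 \<le> s\<close> L_nonneg G_int G_inc
      by (intro add_mono sum_mult_abs_increment_le_set_integral) (auto simp: set_integral_const)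
    also have "\<dots> = (LINT \<tau>:{x..y}|lborel. k \<tau>)"
      unfolding k_def using sum_int[OF xy] const_int by (rule set_integral_add(2)[symmetric])
    finally show ?thesis .
  qed
  show ?thesis
  proof (rule DERIV_nonpos_AE_imp_nonincreasing[where f="\<lambda>y. GL_tilted \<omega> r \<epsilon> v y (u y)" and k=k])
    show "continuous_on {s..t} (\<lambda>y. GL_tilted \<omega> r \<epsilon> v y (u y))"
      unfolding GL_tilted_def GL_real_def using \<open>0 \<le> s\<close>
      by (intro continuous_intros continuous_on_subset[OF cont]) auto
    show "AE x in lborel. s < x \<and> x < t \<longrightarrow> (\<exists>D. DERIV (\<lambda>y. GL_tilted \<omega> r \<epsilon> v y (u y)) x :> D \<and> D \<le> 0)"
      using ACsol_AE_DERIV_GL_tilted_nonpos[OF wg \<open>0 < \<epsilon>\<close> AC, of v] \<open>0 \<le> s\<close>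
      by (auto elim!: eventually_mono)
    show "set_integrable lborel {s..t} k"
      unfolding k_def using sum_int[of s t] const_int \<open>s \<le> t\<close> by (intro set_integral_add(1)) auto
  qed (use \<open>s \<le> t\<close> L_nonneg V2_nonneg bnd in \<open>auto simp: k_def intro!: add_nonneg_nonneg sum_nonneg\<close>)
qed

lemma ACsol_GL_real_dissipation:
  assumes wg: "wgraph \<omega>" and "0 < \<epsilon>" and AC: "ACsol \<omega> r \<epsilon> u \<gamma>" and "0 \<le> s" "s < t"
  shows "(\<Sum>i\<in>UNIV. degr \<omega> r i * (u s i - u t i)^2) / (t - s) \<le> GL_real \<omega> r \<epsilon> (u s) - GL_real \<omega> r \<epsilon> (u t)"
proof -
  define v where "v i = (u t i - u s i) / (t - s)" for i
  define V2 where "V2 = (\<Sum>i\<in>UNIV. degr \<omega> r i * (v i)^2)"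
  have linear: "(\<Sum>i\<in>UNIV. degr \<omega> r i * u t i * v i) - (\<Sum>i\<in>UNIV. degr \<omega> r i * u s i * v i) = (t - s) * V2"
    unfolding V2_def v_def using \<open>s < t\<close>
    by (simp add: sum_subtractf[symmetric] sum_distrib_left power2_eq_square field_simps)
  have "e * (c * (a / e)^2) = c * a^2 / e" if "e \<noteq> 0" for a c e :: real
    using that by (simp add: field_simps power2_eq_square)
  then have "degr \<omega> r i * (u s i - u t i)^2 / (t - s) = (t - s) * (degr \<omega> r i * (v i)^2)" for i
    unfolding v_def using \<open>s < t\<close> by (simp add: power2_commute)
  then have quadratic: "(\<Sum>i\<in>UNIV. degr \<omega> r i * (u s i - u t i)^2) / (t - s) = (t - s) * V2"
    unfolding V2_def by (simp add: sum_divide_distrib sum_distrib_left)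
  show ?thesis
    using ACsol_GL_tilted_nonincreasing[OF assms(1-4), of t v] \<open>s < t\<close> linear quadratic
    unfolding GL_tilted_def V2_def[symmetric] by (simp add: algebra_simps)
qed

lemma ACsol_GL_dissipation:
  assumes wg: "wgraph \<omega>" and "0 < \<epsilon>" and AC: "ACsol \<omega> r \<epsilon> u \<gamma>" and "0 \<le> s" "s < t"
  shows "GL \<omega> r \<epsilon> (u s) - GL \<omega> r \<epsilon> (u t) \<ge> ereal ((normV \<omega> r (\<lambda>i. u s i - u t i))\<^sup>2 / (t - s))"
    and "GL \<omega> r \<epsilon> (u t) \<le> GL \<omega> r \<epsilon> (u s)"
proof -
  have "u s \<in> V01" "u t \<in> V01"
    using AC \<open>0 \<le> s\<close> \<open>s < t\<close> unfolding ACsol_def by auto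
  then have GL: "GL \<omega> r \<epsilon> (u s) = ereal (GL_real \<omega> r \<epsilon> (u s))" "GL \<omega> r \<epsilon> (u t) = ereal (GL_real \<omega> r \<epsilon> (u t))"
    by (simp_all add: GL_eq_GL_real[OF wg])
  have "(normV \<omega> r (\<lambda>i. u s i - u t i))\<^sup>2 / (t - s) \<le> GL_real \<omega> r \<epsilon> (u s) - GL_real \<omega> r \<epsilon> (u t)"
    using ACsol_GL_real_dissipation[OF assms] unfolding normV_square .
  moreover have "0 \<le> (normV \<omega> r (\<lambda>i. u s i - u t i))\<^sup>2 / (t - s)"
    using \<open>s < t\<close> by simp
  ultimately show "GL \<omega> r \<epsilon> (u s) - GL \<omega> r \<epsilon> (u t) \<ge> ereal ((normV \<omega> r (\<lambda>i. u s i - u t i))\<^sup>2 / (t - s))"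
    and "GL \<omega> r \<epsilon> (u t) \<le> GL \<omega> r \<epsilon> (u s)"
    unfolding GL by simp_all
qed

theorem theorem45:
  fixes \<omega> :: "'v::finite \<Rightarrow> 'v \<Rightarrow> real" and r \<epsilon> :: real and u0 :: "'v \<Rightarrow> real"
    and \<tau> :: "nat \<Rightarrow> real" and U :: "nat \<Rightarrow> nat \<Rightarrow> 'v \<Rightarrow> real"
    and uhat \<gamma> :: "real \<Rightarrow> 'v \<Rightarrow> real"
  assumes "wgraph \<omega>" and "0 \<le> r" and "r \<le> 1" and "0 < \<epsilon>"
    and "u0 \<in> V01" and "u0 \<noteq> (\<lambda>_. 0)" and "u0 \<noteq> (\<lambda>_. 1)"
    and "\<And>n. 0 < \<tau> n" and "\<And>n. \<tau> n < \<epsilon>" and "decseq \<tau>" and "\<tau> \<longlonglongrightarrow> 0"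
    and "\<And>n. semidiscrete \<omega> r \<epsilon> (\<tau> n) u0 (U n)"
    and "\<And>t i. 0 \<le> t \<Longrightarrow> (\<lambda>n. U n (nat \<lceil>t / \<tau> n\<rceil>) i) \<longlonglongrightarrow> uhat t i"
    and "ACsol \<omega> r \<epsilon> uhat \<gamma>" and "uhat 0 = u0"
  shows "(\<forall>s t. 0 \<le> s \<longrightarrow> s < t \<longrightarrow>
            GL \<omega> r \<epsilon> (uhat s) - GL \<omega> r \<epsilon> (uhat t)
              \<ge> ereal (1 / (2 * (t - s)) * (normV \<omega> r (\<lambda>i. uhat s i - uhat t i))\<^sup>2))
       \<and> (\<forall>s t. 0 \<le> s \<longrightarrow> s \<le> t \<longrightarrow> GL \<omega> r \<epsilon> (uhat t) \<le> GL \<omega> r \<epsilon> (uhat s))"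
proof (intro conjI allI impI)
  fix s t :: real
  assume st: "0 \<le> s" "s < t"
  have "1 / (2 * (t - s)) * (normV \<omega> r (\<lambda>i. uhat s i - uhat t i))\<^sup>2
      \<le> (normV \<omega> r (\<lambda>i. uhat s i - uhat t i))\<^sup>2 / (t - s)"
    using st zero_le_power2[of "normV \<omega> r (\<lambda>i. uhat s i - uhat t i)"]
    by (simp add: field_simps mult_right_mono)
  then show "GL \<omega> r \<epsilon> (uhat s) - GL \<omega> r \<epsilon> (uhat t)
      \<ge> ereal (1 / (2 * (t - s)) * (normV \<omega> r (\<lambda>i. uhat s i - uhat t i))\<^sup>2)"
    using ACsol_GL_dissipation(1)[OF assms(1,4,14) st] by (meson ereal_less_eq(3) order_trans)
next
  fix s t :: real
  assume "0 \<le> s" "s \<le> t"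
  then show "GL \<omega> r \<epsilon> (uhat t) \<le> GL \<omega> r \<epsilon> (uhat s)"
    using ACsol_GL_dissipation(2)[OF assms(1,4,14), of s t] by (cases "s = t") auto
qed

end
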